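(* In the bialgebra $\text{Ш}_e(\mathbf{k})$, for $k\ge1$, $$\Delta_e(\mathbf{1}^{\otimes(k+1)})=\sum_{i=0}^{k}\mathbf{1}^{\otimes(i+1)}\bar\otimes\mathbf{1}^{\otimes(k+1-i)}+\mu\sum_{i=0}^{k-1}\mathbf{1}^{\otimes(i+1)}\bar\otimes\mathbf{1}^{\otimes(k-i)}.$$
   Context: $\mathbf{k}$ is a commutative unitary ring with identity $\mathbf{1}$, $\lambda,\kappa\in\mathbf{k}$, $\mu$ a root of $t^2-\lambda t+\kappa$. $\text{Ш}_e(\mathbf{k})=\bigoplus_{n\ge0}\mathbf{k}\,\mathbf{1}^{\otimes(n+1)}$ is the free commutative extended Rota-Baxter algebra of weight $(\lambda,\kappa)$ on $\mathbf{k}$, with operator $P_e(\mathbf{1}^{\otimes n})=\mathbf{1}^{\otimes(n+1)}$. $\mathbf{k}$ is regarded as a connected filtered bialgebra with $\Delta_{\mathbf{k}}(x)=x\otimes\mathbf{1}$, $\varepsilon_{\mathbf{k}}=\mathrm{id}$. The coproduct on $\text{Ш}_e(\mathbf{k})$ is given recursively by $\Delta_e(\mathbf{1})=\mathbf{1}\bar\otimes\mathbf{1}$ and, for $k\ge1$, $\Delta_e(\mathbf{1}^{\otimes(k+1)})=P_e(\mathbf{1}^{\otimes k})\bar\otimes\mathbf{1}+(\mathrm{id}\bar\otimes P_e)\Delta_e(\mathbf{1}^{\otimes k})+\mu\mathbf{1}^{\otimes k}\bar\otimes\mathbf{1}$; the counit is $\varepsilon_e(\mathbf{1}^{\otimes(k+1)})=(-\mu)^k\mathbf{1}$.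 $\bar\otimes$ is the tensor product between copies of $\text{Ш}_e(\mathbf{k})$. *)

theory Defs
  imports Main
begin

text \<open>Model of Sha_e(k): the free k-module with basis e_n = 1^{\<otimes>(n+1)}, n \<ge> 0.
  An element is its coefficient function nat \<Rightarrow> 'a (e_n has coefficient x n).
  An element of Sha_e(k) \<otimes>bar Sha_e(k) is its coefficient function
  c :: nat \<Rightarrow> nat \<Rightarrow> 'a, where c i j is the coefficient of e_i \<otimes>bar e_j.\<close>

type_synonym 'a sha = "nat \<Rightarrow> 'a"
type_synonym 'a sha_tensor = "nat \<Rightarrow> nat \<Rightarrow> 'a"

definition sha_basis :: "nat \<Rightarrow> 'a::comm_ring_1 sha" where
  "sha_basis n = (\<lambda>m. if m = n then 1 else 0)"

definition basis_tensor :: "nat \<Rightarrow> nat \<Rightarrow> 'a::comm_ring_1 sha_tensor" where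
  "basis_tensor i j = (\<lambda>a b. sha_basis i a * sha_basis j b)"

definition P_e :: "'a::comm_ring_1 sha \<Rightarrow> 'a sha" where
  "P_e x = (\<lambda>n. if n = 0 then 0 else x (n - 1))"

definition id_tensor_P :: "'a::comm_ring_1 sha_tensor \<Rightarrow> 'a sha_tensor" where
  "id_tensor_P c = (\<lambda>a. P_e (c a))"

fun Delta_e_basis :: "'a::comm_ring_1 \<Rightarrow> nat \<Rightarrow> 'a sha_tensor" where
  "Delta_e_basis mu 0 = basis_tensor 0 0"
| "Delta_e_basis mu (Suc k) =
     (\<lambda>a b. basis_tensor (Suc k) 0 a b + id_tensor_P (Delta_e_basis mu k) a b
            + mu * basis_tensor k 0 a b)"

end

theory Submission
  imports Defs
begin

text \<open>The coefficient of \<open>e\<^sub>a \<otimes> e\<^sub>b\<close> in \<open>\<Delta>\<^sub>e(e\<^sub>k)\<close> is \<open>1\<close> on the antidiagonal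
  \<open>a + b = k\<close> and \<open>\<mu>\<close> on \<open>a + b = k - 1\<close>. In the recursion, \<open>id \<otimes> P\<^sub>e\<close> shifts the
  second index up by one, so the antidiagonals of \<open>\<Delta>\<^sub>e(e\<^sub>k)\<close> supply all entries of
  those of \<open>\<Delta>\<^sub>e(e\<^bsub>k+1\<^esub>)\<close> except the ones with \<open>b = 0\<close>, and these are exactly
  \<open>e\<^bsub>k+1\<^esub> \<otimes> e\<^sub>0\<close> and \<open>\<mu> e\<^sub>k \<otimes> e\<^sub>0\<close>.\<close>

lemma basis_tensor_apply:
  "basis_tensor i j a b = (if a = i \<and> b = j then 1 else (0::'a::comm_ring_1))"
  by (simp add: basis_tensor_def sha_basis_def)

lemma sum_basis_tensor_antidiagonal:
  "(\<Sum>i = 0..k. basis_tensor i (k - i) a b) = (if a + b = k then 1 else (0::'a::comm_ring_1))"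
proof -
  have "(\<Sum>i = 0..k. basis_tensor i (k - i) a b)
      = (\<Sum>i = 0..k. if a = i then (if a + b = k then 1 else 0) else (0::'a))"
    by (rule sum.cong) (auto simp: basis_tensor_apply)
  also have "\<dots> = (if a + b = k then 1 else 0)"
    by (simp add: sum.delta)
  finally show ?thesis .
qed

lemma Delta_e_basis_apply:
  "Delta_e_basis (mu::'a::comm_ring_1) k a b
     = (if a + b = k then 1 else 0) + (if a + b + 1 = k then mu else 0)"
proof (induction k arbitrary: b)
  case 0
  show ?case by (simp add: basis_tensor_apply)
next
  case (Suc k)
  show ?case
    by (cases b) (simp_all add: basis_tensor_apply id_tensor_P_def P_e_def Suc.IH)
qed

theorem proposition4p12:
  fixes lam kap mu :: "'a::comm_ring_1" and k :: nat
  assumes "mu ^ 2 - lam * mu + kap = 0"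
    and "k \<ge> 1"
  shows "Delta_e_basis mu k =
    (\<lambda>a b. (\<Sum>i = 0..k. basis_tensor i (k - i) a b)
           + mu * (\<Sum>i = 0..k - 1. basis_tensor i (k - 1 - i) a b))"
proof (intro ext)
  fix a b
  have "(a + b = k - 1) = (a + b + 1 = k)"
    using \<open>k \<ge> 1\<close> by arith
  then show "Delta_e_basis mu k a b = (\<Sum>i = 0..k. basis_tensor i (k - i) a b)
      + mu * (\<Sum>i = 0..k - 1. basis_tensor i (k - 1 - i) a b)"
    unfolding sum_basis_tensor_antidiagonal Delta_e_basis_apply by simp
qed

end
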